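(* Let $f \colon \mathbb{R}^n \to \mathbb{R}$ be the Euclidean norm, $f(x) = \|x\|$. Then every BFGS sequence $(x_k)_{k \ge 0}$ for $f$ converges to $0$.
   Context: A sequence $(x_k)$ is a BFGS sequence for $f$ if $f$ is differentiable at each $x_k$ with $\nabla f(x_k) \neq 0$, and there exist parameters $0<\mu<\nu<1$ and a positive definite $n\times n$ matrix $H_0$ such that, with $s_k = x_{k+1}-x_k$, $y_k = \nabla f(x_{k+1}) - \nabla f(x_k)$, $V_k = I - \frac{s_k y_k^T}{s_k^T y_k}$ and $H_{k+1} = V_k H_k V_k^T + \frac{s_k s_k^T}{s_k^T y_k}$, one has for all $k=0,1,2,\dots$: $H_k \nabla f(x_k) \in -\mathbb{R}_+ s_k$, $f(x_{k+1}) \le f(x_k) + \mu \nabla f(x_k)^T s_k$, and $\nabla f(x_{k+1})^T s_k \ge \nu \nabla f(x_k)^T s_k$. *)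

theory Defs
  imports "HOL-Analysis.Analysis"
begin

definition outer :: "real^'n \<Rightarrow> real^'n \<Rightarrow> real^'n^'n" where
  "outer s y = (\<chi> i j. s $ i * y $ j)"

definition pos_def :: "real^'n^'n \<Rightarrow> bool" where
  "pos_def H \<longleftrightarrow> transpose H = H \<and> (\<forall>v. v \<noteq> 0 \<longrightarrow> v \<bullet> (H *v v) > 0)"

definition has_grad :: "(real^'n \<Rightarrow> real) \<Rightarrow> real^'n \<Rightarrow> real^'n \<Rightarrow> bool" where
  "has_grad f g x \<longleftrightarrow> (f has_derivative (\<lambda>h. g \<bullet> h)) (at x)"

definition bfgs_seq :: "(real^'n \<Rightarrow> real) \<Rightarrow> (nat \<Rightarrow> real^'n) \<Rightarrow> bool" where
  "bfgs_seq f x \<longleftrightarrow>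
    (\<exists>g :: nat \<Rightarrow> real^'n. (\<forall>k. has_grad f (g k) (x k) \<and> g k \<noteq> 0) \<and>
      (\<exists>(\<mu>::real) (\<nu>::real) (H :: nat \<Rightarrow> real^'n^'n).
         0 < \<mu> \<and> \<mu> < \<nu> \<and> \<nu> < 1 \<and> pos_def (H 0) \<and>
         (\<forall>k. let s = x (Suc k) - x k; y = g (Suc k) - g k;
                   V = mat 1 - (1 / (s \<bullet> y)) *\<^sub>R outer s y
               in H (Suc k) = V ** H k ** transpose V + (1 / (s \<bullet> y)) *\<^sub>R outer s s
                  \<and> (\<exists>t\<ge>0. H k *v g k = - (t *\<^sub>R s))
                  \<and> f (x (Suc k)) \<le> f (x k) + \<mu> * (g k \<bullet> s)
                  \<and> g (Suc k) \<bullet> s \<ge> \<nu> * (g k \<bullet> s))))"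

end

theory Submission
  imports Defs
begin

(*
  Byrd-Nocedal potential argument.  For B_k = H_k^-1 the function
  psi(B) = tr B - ln |det B| is bounded below on positive definite matrices, and one
  BFGS step changes it by at most  -1 + |y|^2 / s'y + ln ((g's)^2 / (|g|^2 s'y)).
  The curvature condition gives (g's)^2 / s'y <= -g's / (1 - nu), and the Armijo condition
  makes f(x_k) decrease, so -g's -> 0 whenever f is bounded below.  Hence psi would
  eventually drop by at least 1 per step, unless the gradients approach 0 or
  |y|^2 / s'y is unbounded.
  For f = norm we have g_k = sgn x_k, so |g_k| = 1, and |x_k| decreases to some L.  If L > 0,
  then |y_k|^2 / s_k'y_k = 2 / (|x_k| + |x_(k+1)|) <= 1 / L, a contradiction; so L = 0.
*)

lemma matrix_vector_mult_outer: "outer a b *v z = (b \<bullet> z) *\<^sub>R a"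
  by (simp add: vec_eq_iff outer_def matrix_vector_mult_def inner_vec_def sum_distrib_left mult_ac)

lemma transpose_outer: "transpose (outer a b) = outer b a"
  by (simp add: vec_eq_iff outer_def transpose_def)

lemma trace_outer: "trace (outer a b) = a \<bullet> b"
  by (simp add: trace_def outer_def inner_vec_def)

lemma trace_scaleR: "trace (c *\<^sub>R (A::real^'n^'n)) = c * trace A"
  by (simp add: trace_def sum_distrib_left)

lemma det_mat1_row_replace:
  fixes w :: "'a::field^'n"
  shows "det ((\<chi> i. if i = p then w else axis i 1) :: 'a^'n^'n) = w $ p"
proof -
  have rows: "row i (mat 1 :: 'a^'n^'n) = axis i 1" for i
    by (simp add: vec_eq_iff row_def mat_def axis_def)
  show ?thesis
    using cramer_lemma_transpose[of p w "mat 1"] unfolding rows basis_expansion by simp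
qed

lemma det_mat1_row_replace_plus_multiples:
  fixes u v :: "'a::field^'n"
  assumes "finite F" "p \<notin> F"
  shows "det ((\<chi> i. if i = p then v else if i \<in> F then axis i 1 + u $ i *s v else axis i 1)
    :: 'a^'n^'n) = v $ p"
  using assms
proof (induction F rule: finite_induct)
  case empty
  have "((\<chi> i. if i = p then v else if i \<in> {} then axis i 1 + u $ i *s v else axis i 1)
    :: 'a^'n^'n) = (\<chi> i. if i = p then v else axis i 1)"
    by (simp add: vec_eq_iff)
  then show ?case by (simp add: det_mat1_row_replace)
next
  case (insert q F)
  let ?M = "(\<chi> i. if i = p then v else if i \<in> F then axis i 1 + u $ i *s v else axis i 1)
    :: 'a^'n^'n"
  have "q \<noteq> p" "q \<notin> F" using insert by auto
  \<comment> \<open>row q is the unit row plus u$q times row p, and adding a multiple of another row keeps det\<close>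
  then have "((\<chi> i. if i = p then v else if i \<in> insert q F then axis i 1 + u $ i *s v
      else axis i 1) :: 'a^'n^'n)
    = (\<chi> k. if k = q then row q ?M + u $ q *s row p ?M else row k ?M)"
    by (auto simp: vec_eq_iff row_def)
  then show ?case
    using det_row_operation[OF \<open>q \<noteq> p\<close>, of ?M] insert by simp
qed

lemma det_mat1_plus_outer:
  fixes u v :: "real^'n"
  shows "det (mat 1 + outer u v) = 1 + u \<bullet> v"
proof -
  have rows: "det ((\<chi> i. if i \<in> F then axis i 1 + u $ i *s v else axis i 1) :: real^'n^'n)
      = 1 + (\<Sum>i\<in>F. u $ i * v $ i)" for F
  proof (induction F rule: infinite_finite_induct)
    case (infinite F)
    then show ?case by simp
  next
    case empty
    have "((\<chi> i. axis i 1) :: real^'n^'n) = mat 1"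
      by (simp add: vec_eq_iff mat_def axis_def)
    then show ?case by simp
  next
    case (insert p F)
    have "((\<chi> i. if i \<in> insert p F then axis i 1 + u $ i *s v else axis i 1) :: real^'n^'n)
      = (\<chi> i. if i = p then axis p 1 + u $ p *s v
              else if i \<in> F then axis i 1 + u $ i *s v else axis i 1)"
      by (simp add: vec_eq_iff)
    moreover have "((\<chi> i. if i = p then axis p 1
              else if i \<in> F then axis i 1 + u $ i *s v else axis i 1) :: real^'n^'n)
      = (\<chi> i. if i \<in> F then axis i 1 + u $ i *s v else axis i 1)"
      using insert by (auto simp: vec_eq_iff)
    ultimately show ?case
      using insert det_mat1_row_replace_plus_multiples[OF insert(1,2), of v u]
      by (simp add: det_row_add det_row_mul)
  qed
  have "mat 1 + outer u v = ((\<chi> i. if i \<in> UNIV then axis i 1 + u $ i *s v else axis i 1)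
      :: real^'n^'n)"
    by (simp add: vec_eq_iff mat_def axis_def outer_def)
  then show ?thesis using rows[of UNIV] by (simp add: inner_vec_def)
qed

lemma det_mat1_plus_two_outers:
  fixes a1 b1 a2 b2 :: "real^'n"
  assumes nz: "1 + b2 \<bullet> a2 \<noteq> 0"
  shows "det (mat 1 + outer a1 b1 + outer a2 b2)
    = (1 + b1 \<bullet> a1) * (1 + b2 \<bullet> a2) - (b1 \<bullet> a2) * (b2 \<bullet> a1)"
proof -
  define c where "c = a1 - ((b2 \<bullet> a1) / (1 + b2 \<bullet> a2)) *\<^sub>R a2"
  have "b2 \<bullet> c = (b2 \<bullet> a1) / (1 + b2 \<bullet> a2)"
    using nz by (simp add: c_def inner_diff_right field_simps)
  then have c: "c + (b2 \<bullet> c) *\<^sub>R a2 = a1"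
    by (simp add: c_def)
  have "mat 1 + outer a1 b1 + outer a2 b2 = (mat 1 + outer a2 b2) ** (mat 1 + outer c b1)"
  proof (rule matrix_eq[THEN iffD2], intro allI)
    fix z :: "real^'n"
    have "((mat 1 + outer a2 b2) ** (mat 1 + outer c b1)) *v z
        = z + (b1 \<bullet> z) *\<^sub>R (c + (b2 \<bullet> c) *\<^sub>R a2) + (b2 \<bullet> z) *\<^sub>R a2"
      by (simp add: matrix_vector_mul_assoc[symmetric] matrix_vector_mult_add_rdistrib
          matrix_vector_mult_outer inner_add_right algebra_simps)
    then show "(mat 1 + outer a1 b1 + outer a2 b2) *v z
        = ((mat 1 + outer a2 b2) ** (mat 1 + outer c b1)) *v z"
      unfolding c by (simp add: matrix_vector_mult_add_rdistrib matrix_vector_mult_outer)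
  qed
  then have "det (mat 1 + outer a1 b1 + outer a2 b2) = (1 + a2 \<bullet> b2) * (1 + c \<bullet> b1)"
    by (simp add: det_mul det_mat1_plus_outer)
  also have "\<dots> = (1 + b1 \<bullet> a1) * (1 + b2 \<bullet> a2) - (b1 \<bullet> a2) * (b2 \<bullet> a1)"
  proof -
    have "c \<bullet> b1 = b1 \<bullet> a1 - (b2 \<bullet> a1) * (b1 \<bullet> a2) / (1 + b2 \<bullet> a2)"
      unfolding c_def inner_diff_left inner_scaleR_left by (simp add: inner_commute)
    then show ?thesis using nz by (simp add: inner_commute field_simps)
  qed
  finally show ?thesis .
qed

lemma pos_def_nonneg:
  assumes "pos_def A"
  shows "0 \<le> v \<bullet> (A *v v)"
  using assms unfolding pos_def_def by (metis inner_zero_left less_eq_real_def)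

lemma pos_def_matrix_inv:
  assumes "pos_def H"
  shows "H ** matrix_inv H = mat 1"
proof -
  have "H *v v = 0 \<Longrightarrow> v = 0" for v
    using assms unfolding pos_def_def by (metis inner_zero_right less_irrefl)
  then have "invertible H"
    unfolding invertible_left_inverse matrix_left_invertible_ker by blast
  then show ?thesis
    unfolding invertible_def matrix_inv_def by (rule someI2_ex) blast
qed

lemma pos_def_right_inverse:
  assumes H: "pos_def H" and HB: "H ** B = mat 1"
  shows "pos_def B"
proof -
  have Hsym: "transpose H = H"
    using H by (simp add: pos_def_def)
  have "transpose B = transpose B ** (H ** B)"
    by (simp add: HB)
  also have "\<dots> = transpose (H ** B) ** B"
    by (simp add: matrix_mul_assoc matrix_transpose_mul Hsym)
  finally have "transpose B = B"
    by (simp add: HB)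
  moreover have "v \<bullet> (B *v v) > 0" if "v \<noteq> 0" for v
  proof -
    have HBv: "H *v (B *v v) = v"
      by (simp add: matrix_vector_mul_assoc HB)
    then have "B *v v \<noteq> 0"
      using that by auto
    then have "(B *v v) \<bullet> (H *v (B *v v)) > 0"
      using H unfolding pos_def_def by blast
    then show ?thesis
      by (simp add: HBv inner_commute)
  qed
  ultimately show ?thesis
    by (simp add: pos_def_def)
qed

lemma inner_axis_matrix_vector_axis:
  "axis i a \<bullet> ((B::real^'n^'n) *v axis j b) = a * b * B $ i $ j"
proof -
  have "axis j b = b *\<^sub>R axis j 1"
    by (simp add: vec_eq_iff axis_def)
  then have "B *v axis j b = b *\<^sub>R column j B"
    by (simp only: matrix_vector_mult_scaleR matrix_vector_mult_basis)
  then show ?thesis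
    by (simp add: inner_axis' column_def)
qed

lemma pos_def_diag_pos:
  fixes B :: "real^'n^'n"
  assumes "pos_def B"
  shows "B $ i $ i > 0"
proof -
  have "axis i 1 \<noteq> (0::real^'n)"
    by (simp add: axis_eq_0_iff)
  then have "0 < axis i 1 \<bullet> (B *v axis i 1)"
    using assms unfolding pos_def_def by blast
  then show ?thesis
    by (simp add: inner_axis_matrix_vector_axis)
qed

lemma pos_def_diag_le_trace:
  assumes "pos_def B"
  shows "B $ i $ i \<le> trace B"
  unfolding trace_def
  by (rule member_le_sum) (auto intro: less_imp_le pos_def_diag_pos[OF assms])

lemma pos_def_abs_entry_le_trace:
  assumes B: "pos_def B"
  shows "\<bar>B $ i $ j\<bar> \<le> trace B"
proof (cases "i = j")
  case True
  then show ?thesis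
    using pos_def_diag_pos[OF B] pos_def_diag_le_trace[OF B] by (simp add: less_imp_le)
next
  case False
  have quad: "(axis i 1 + axis j c) \<bullet> (B *v (axis i 1 + axis j c))
      = B $ i $ i + 2 * c * B $ i $ j + c * c * B $ j $ j" for c
  proof -
    have "B $ j $ i = transpose B $ i $ j"
      by (simp add: transpose_def)
    then have "B $ j $ i = B $ i $ j"
      using B by (simp add: pos_def_def)
    then show ?thesis
      by (simp add: inner_add_left inner_add_right matrix_vector_right_distrib
          inner_axis_matrix_vector_axis)
  qed
  have "0 \<le> B $ i $ i + 2 * B $ i $ j + B $ j $ j"
    using pos_def_nonneg[OF B, of "axis i 1 + axis j 1"] quad[of 1] by linarith
  moreover have "0 \<le> B $ i $ i - 2 * B $ i $ j + B $ j $ j"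
    using pos_def_nonneg[OF B, of "axis i 1 + axis j (-1)"] quad[of "-1"] by linarith
  moreover have "B $ i $ i + B $ j $ j \<le> trace B"
  proof -
    have "B $ i $ i + B $ j $ j = (\<Sum>k\<in>{i, j}. B $ k $ k)"
      using False by simp
    also have "\<dots> \<le> trace B"
      unfolding trace_def by (rule sum_mono2) (auto intro: less_imp_le pos_def_diag_pos[OF B])
    finally show ?thesis .
  qed
  ultimately show ?thesis
    unfolding abs_le_iff by linarith
qed

lemma pos_def_abs_det_le:
  fixes B :: "real^'n^'n"
  assumes B: "pos_def B"
  shows "\<bar>det B\<bar> \<le> fact CARD('n) * trace B ^ CARD('n)"
proof -
  have "\<bar>det B\<bar> \<le> (\<Sum>p\<in>{p. p permutes (UNIV::'n set)}. \<bar>of_int (sign p) * (\<Prod>i\<in>UNIV. B $ i $ p i)\<bar>)"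
    unfolding det_def by (rule sum_abs)
  also have "\<dots> \<le> (\<Sum>p\<in>{p. p permutes (UNIV::'n set)}. trace B ^ CARD('n))"
  proof (rule sum_mono)
    fix p :: "'n \<Rightarrow> 'n"
    have "(\<Prod>i\<in>UNIV. \<bar>B $ i $ p i\<bar>) \<le> (\<Prod>i\<in>(UNIV::'n set). trace B)"
      by (rule prod_mono) (simp add: pos_def_abs_entry_le_trace[OF B])
    then show "\<bar>of_int (sign p) * (\<Prod>i\<in>UNIV. B $ i $ p i)\<bar> \<le> trace B ^ CARD('n)"
      by (simp add: abs_mult abs_prod sign_def)
  qed
  also have "\<dots> = fact CARD('n) * trace B ^ CARD('n)"
    by (simp add: card_permutations)
  finally show ?thesis .
qed

(* The potential psi of Byrd and Nocedal; using |det B| spares us proving det B > 0. *)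
definition bfgs_potential :: "real^'n^'n \<Rightarrow> real" where
  "bfgs_potential B = trace B - ln \<bar>det B\<bar>"

lemma bfgs_potential_lower_bound:
  fixes B :: "real^'n^'n"
  defines "n \<equiv> real CARD('n)"
  assumes B: "pos_def B" and "det B \<noteq> 0"
  shows "n - n * ln n - ln (fact CARD('n)) \<le> bfgs_potential B"
proof -
  have n: "n > 0" unfolding n_def by simp
  have T: "trace B > 0"
    using pos_def_diag_pos[OF B] pos_def_diag_le_trace[OF B] by (meson less_le_trans)
  have "ln \<bar>det B\<bar> \<le> ln (fact CARD('n) * trace B ^ CARD('n))"
    using \<open>det B \<noteq> 0\<close> pos_def_abs_det_le[OF B] by simp
  also have "\<dots> = ln (fact CARD('n)) + n * ln (trace B)"
    using T by (simp add: ln_mult ln_realpow n_def)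
  finally have "ln \<bar>det B\<bar> \<le> ln (fact CARD('n)) + n * ln (trace B)" .
  moreover have "ln (trace B / n) \<le> trace B / n - 1"
    using T n by (intro ln_le_minus_one) simp
  then have "n * (ln (trace B) - ln n) \<le> n * (trace B / n - 1)"
    using T n by (intro mult_left_mono) (simp_all add: ln_div)
  then have "n * ln (trace B) \<le> trace B + n * ln n - n"
    using n by (simp add: algebra_simps)
  ultimately show ?thesis
    unfolding bfgs_potential_def by linarith
qed

definition bfgs_update :: "real^'n^'n \<Rightarrow> real^'n \<Rightarrow> real^'n \<Rightarrow> real^'n^'n" where
  "bfgs_update H s y =
    (mat 1 - (1 / (s \<bullet> y)) *\<^sub>R outer s y) ** H ** transpose (mat 1 - (1 / (s \<bullet> y)) *\<^sub>R outer s y)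
    + (1 / (s \<bullet> y)) *\<^sub>R outer s s"

definition bfgs_inverse_update :: "real^'n^'n \<Rightarrow> real^'n \<Rightarrow> real^'n \<Rightarrow> real^'n^'n" where
  "bfgs_inverse_update B s y =
    B - (1 / (s \<bullet> (B *v s))) *\<^sub>R outer (B *v s) (B *v s) + (1 / (s \<bullet> y)) *\<^sub>R outer y y"

lemma inner_matrix_vector_symmetric:
  fixes A :: "real^'n^'n"
  assumes "transpose A = A"
  shows "(A *v u) \<bullet> v = u \<bullet> (A *v v)"
  by (metis assms dot_lmul_matrix transpose_matrix_vector)

lemma matrix_vector_mult_mat1_minus_outer:
  "(mat 1 - c *\<^sub>R outer a b) *v w = w - (c * (b \<bullet> w)) *\<^sub>R a"
  by (simp add: matrix_vector_mult_diff_rdistrib matrix_vector_mult_outer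
      scaleR_matrix_vector_assoc[symmetric])

lemma inner_mat1_minus_outer: "v \<bullet> ((mat 1 - c *\<^sub>R outer a b) *v z) = (v - (c * (a \<bullet> v)) *\<^sub>R b) \<bullet> z"
  by (simp add: matrix_vector_mult_mat1_minus_outer inner_diff_left inner_diff_right inner_commute)

lemma transpose_mat1_minus_outer:
  "transpose (mat 1 - c *\<^sub>R outer a b) = mat 1 - c *\<^sub>R outer b a"
  by (simp add: vec_eq_iff transpose_def mat_def outer_def mult.commute)

lemma matrix_vector_mult_bfgs_update:
  "bfgs_update H s y *v w =
    (mat 1 - (1 / (s \<bullet> y)) *\<^sub>R outer s y) *v (H *v (w - ((s \<bullet> w) / (s \<bullet> y)) *\<^sub>R y))
    + ((s \<bullet> w) / (s \<bullet> y)) *\<^sub>R s"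
  by (simp add: bfgs_update_def transpose_mat1_minus_outer matrix_vector_mult_add_rdistrib
      matrix_vector_mul_assoc[symmetric] matrix_vector_mult_mat1_minus_outer
      matrix_vector_mult_outer scaleR_matrix_vector_assoc[symmetric])

lemma transpose_bfgs_update:
  assumes "transpose H = H"
  shows "transpose (bfgs_update H s y) = bfgs_update H s y"
proof -
  have transpose_add: "transpose (A + B) = transpose A + transpose B" for A B :: "real^'n^'n"
    by (simp add: vec_eq_iff transpose_def)
  show ?thesis
    by (simp add: bfgs_update_def transpose_add matrix_transpose_mul matrix_mul_assoc transpose_scalar
        transpose_outer assms)
qed

lemma pos_def_bfgs_update:
  assumes H: "pos_def H" and sy: "0 < s \<bullet> y"
  shows "pos_def (bfgs_update H s y)"
proof -
  have quad: "v \<bullet> (bfgs_update H s y *v v)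
      = u \<bullet> (H *v u) + (s \<bullet> v)\<^sup>2 / (s \<bullet> y)"
    if "u = v - ((s \<bullet> v) / (s \<bullet> y)) *\<^sub>R y" for u v
    unfolding matrix_vector_mult_bfgs_update inner_add_right inner_mat1_minus_outer that
    by (simp add: power2_eq_square inner_commute)
  have "v \<bullet> (bfgs_update H s y *v v) > 0" if "v \<noteq> 0" for v
  proof (cases "s \<bullet> v = 0")
    case True
    then show ?thesis
      using quad[OF refl, of v] H that by (simp add: pos_def_def)
  next
    case False
    have "0 \<le> u \<bullet> (H *v u)" for u
      using H by (rule pos_def_nonneg)
    moreover have "0 < (s \<bullet> v)\<^sup>2 / (s \<bullet> y)"
      using False sy by simp
    ultimately show ?thesis
      using quad[OF refl, of v] by (metis add_nonneg_pos)
  qed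
  moreover have "transpose H = H"
    using H by (simp add: pos_def_def)
  ultimately show ?thesis
    by (simp add: pos_def_def transpose_bfgs_update)
qed

lemma matrix_vector_mult_bfgs_inverse_update:
  "bfgs_inverse_update B s y *v z =
    B *v z - (((B *v s) \<bullet> z) / (s \<bullet> (B *v s))) *\<^sub>R (B *v s) + ((y \<bullet> z) / (s \<bullet> y)) *\<^sub>R y"
  by (simp add: bfgs_inverse_update_def matrix_vector_mult_add_rdistrib
      matrix_vector_mult_diff_rdistrib matrix_vector_mult_outer scaleR_matrix_vector_assoc[symmetric])

lemma trace_bfgs_inverse_update:
  "trace (bfgs_inverse_update B s y) =
    trace B - ((B *v s) \<bullet> (B *v s)) / (s \<bullet> (B *v s)) + (y \<bullet> y) / (s \<bullet> y)"
  by (simp add: bfgs_inverse_update_def trace_add trace_sub trace_scaleR trace_outer)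

context
  fixes H B :: "real^'n^'n" and s y :: "real^'n"
  assumes H: "pos_def H" and HB: "H ** B = mat 1" and sy: "0 < s \<bullet> y"
begin

private lemma HBv: "H *v (B *v z) = z"
  by (simp add: matrix_vector_mul_assoc HB)

private lemma BHv: "B *v (H *v z) = z"
  using matrix_left_right_inverse1[OF HB] by (simp add: matrix_vector_mul_assoc)

private lemma B_sym: "transpose B = B"
  using pos_def_right_inverse[OF H HB] by (simp add: pos_def_def)

private lemma sBs_pos: "0 < s \<bullet> (B *v s)"
proof -
  have "s \<noteq> 0"
    using sy by auto
  then show ?thesis
    using pos_def_right_inverse[OF H HB] by (simp add: pos_def_def)
qed

lemma bfgs_update_inverse_update:
  "bfgs_update H s y ** bfgs_inverse_update B s y = mat 1"
proof -
  have "bfgs_update H s y *v (bfgs_inverse_update B s y *v z) = z" for z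
  proof -
    define c where "c = ((B *v s) \<bullet> z) / (s \<bullet> (B *v s))"
    define w where "w = bfgs_inverse_update B s y *v z"
    have w: "w = B *v z - c *\<^sub>R (B *v s) + ((y \<bullet> z) / (s \<bullet> y)) *\<^sub>R y"
      unfolding w_def c_def by (rule matrix_vector_mult_bfgs_inverse_update)
    have "s \<bullet> (B *v z) = (B *v s) \<bullet> z"
      using inner_matrix_vector_symmetric[OF B_sym, of s z] by simp
    then have sw: "s \<bullet> w = y \<bullet> z"
      unfolding w inner_diff_right inner_add_right inner_scaleR_right
      using sBs_pos sy by (simp add: c_def inner_commute)
    have "w - ((y \<bullet> z) / (s \<bullet> y)) *\<^sub>R y = B *v z - c *\<^sub>R (B *v s)"
      by (simp add: w)
    then have Hu: "H *v (w - ((y \<bullet> z) / (s \<bullet> y)) *\<^sub>R y) = z - c *\<^sub>R s"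
      by (simp add: matrix_vector_mult_diff_distrib matrix_vector_mult_scaleR HBv)
    have "1 / (s \<bullet> y) * (y \<bullet> (z - c *\<^sub>R s)) = (y \<bullet> z) / (s \<bullet> y) - c"
      using sy by (simp add: inner_diff_right inner_commute field_simps)
    then show ?thesis
      unfolding w_def[symmetric] matrix_vector_mult_bfgs_update sw Hu
        matrix_vector_mult_mat1_minus_outer
      by (simp add: algebra_simps)
  qed
  then show ?thesis
    by (simp add: matrix_eq matrix_vector_mul_assoc[symmetric])
qed

lemma det_bfgs_inverse_update:
  "det (bfgs_inverse_update B s y) = det B * (s \<bullet> y) / (s \<bullet> (B *v s))"
proof -
  define a1 where "a1 = (- 1 / (s \<bullet> (B *v s))) *\<^sub>R s"
  define a2 where "a2 = (1 / (s \<bullet> y)) *\<^sub>R (H *v y)"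
  have "bfgs_inverse_update B s y = B ** (mat 1 + outer a1 (B *v s) + outer a2 y)"
  proof (rule matrix_eq[THEN iffD2], intro allI)
    fix z
    show "bfgs_inverse_update B s y *v z = (B ** (mat 1 + outer a1 (B *v s) + outer a2 y)) *v z"
      by (simp add: matrix_vector_mult_bfgs_inverse_update matrix_vector_mul_assoc[symmetric]
          matrix_vector_mult_add_rdistrib matrix_vector_right_distrib matrix_vector_mult_outer
          matrix_vector_mult_diff_distrib matrix_vector_mult_scaleR BHv a1_def a2_def)
  qed
  moreover have "1 + y \<bullet> a2 \<noteq> 0"
  proof -
    have "0 \<le> y \<bullet> (H *v y)"
      using H by (rule pos_def_nonneg)
    then have "0 \<le> y \<bullet> a2"
      using sy by (simp add: a2_def)
    then show ?thesis
      by linarith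
  qed
  moreover have "(B *v s) \<bullet> a2 = 1"
    using sy by (simp add: a2_def inner_matrix_vector_symmetric[OF B_sym] BHv)
  moreover have "(B *v s) \<bullet> a1 = - 1"
    using sBs_pos by (simp add: a1_def inner_commute)
  ultimately show ?thesis
    using sBs_pos by (simp add: det_mul det_mat1_plus_two_outers a1_def inner_commute)
qed

end

lemma not_bdd_below_if_eventually_decreasing_by_one:
  fixes P :: "nat \<Rightarrow> real"
  assumes "\<forall>\<^sub>F k in sequentially. P (Suc k) \<le> P k - 1"
  shows "\<not> bdd_below (range P)"
proof
  assume "bdd_below (range P)"
  then obtain b where b: "\<And>k. b \<le> P k"
    by (auto simp: bdd_below_def)
  obtain N where N: "\<And>k. N \<le> k \<Longrightarrow> P (Suc k) \<le> P k - 1"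
    using assms by (auto simp: eventually_sequentially)
  have "P (N + m) \<le> P N - m" for m
  proof (induction m)
    case (Suc m)
    then show ?case
      using N[of "N + m"] by simp
  qed simp
  from this[of "nat \<lceil>P N - b\<rceil> + 1"] b[of "N + (nat \<lceil>P N - b\<rceil> + 1)"]
  show False by linarith
qed

(* Only the line-search conditions are assumed: g need not be the gradient of f. *)
locale bfgs_iteration =
  fixes f :: "real^'n \<Rightarrow> real" and x g :: "nat \<Rightarrow> real^'n" and \<mu> \<nu> :: real
    and H :: "nat \<Rightarrow> real^'n^'n"
  assumes gradient_nonzero: "g k \<noteq> 0"
    and line_search_params: "0 < \<mu>" "\<mu> < \<nu>" "\<nu> < 1"
    and pos_def_H0: "pos_def (H 0)"
    and H_Suc: "H (Suc k) = bfgs_update (H k) (x (Suc k) - x k) (g (Suc k) - g k)"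
    and search_direction: "\<exists>t\<ge>0. H k *v g k = - (t *\<^sub>R (x (Suc k) - x k))"
    and armijo: "f (x (Suc k)) \<le> f (x k) + \<mu> * (g k \<bullet> (x (Suc k) - x k))"
    and curvature: "\<nu> * (g k \<bullet> (x (Suc k) - x k)) \<le> g (Suc k) \<bullet> (x (Suc k) - x k)"
begin

abbreviation s :: "nat \<Rightarrow> real^'n" where "s k \<equiv> x (Suc k) - x k"
abbreviation y :: "nat \<Rightarrow> real^'n" where "y k \<equiv> g (Suc k) - g k"
abbreviation B :: "nat \<Rightarrow> real^'n^'n" where "B k \<equiv> matrix_inv (H k)"

lemma curvature_lower_bound: "(1 - \<nu>) * - (g k \<bullet> s k) \<le> s k \<bullet> y k"
  using curvature[of k] by (simp add: inner_diff_right inner_commute algebra_simps)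

lemma descent_if_pos_def:
  assumes "pos_def (H k)"
  shows "g k \<bullet> s k < 0"
proof -
  obtain t where t: "0 \<le> t" "H k *v g k = - (t *\<^sub>R s k)"
    using search_direction by blast
  have "0 < g k \<bullet> (H k *v g k)"
    using assms gradient_nonzero unfolding pos_def_def by blast
  then have "0 < t * - (g k \<bullet> s k)"
    by (simp add: t(2))
  then show ?thesis
    using t(1) by (simp add: zero_less_mult_iff mult_less_0_iff)
qed

lemma curvature_pos_if_descent:
  assumes "g k \<bullet> s k < 0"
  shows "0 < s k \<bullet> y k"
proof -
  have "0 < (1 - \<nu>) * - (g k \<bullet> s k)"
    using assms line_search_params by (simp add: mult_pos_neg)
  then show ?thesis
    using curvature_lower_bound[of k] by linarith
qed

lemma pos_def_H: "pos_def (H k)"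
proof (induction k)
  case 0
  show ?case by (rule pos_def_H0)
next
  case (Suc k)
  have "0 < s k \<bullet> y k"
    by (rule curvature_pos_if_descent[OF descent_if_pos_def[OF Suc]])
  with Suc show ?case
    unfolding H_Suc by (rule pos_def_bfgs_update)
qed

lemma descent: "g k \<bullet> s k < 0"
  by (rule descent_if_pos_def[OF pos_def_H])

lemma curvature_pos: "0 < s k \<bullet> y k"
  by (rule curvature_pos_if_descent[OF descent])

lemma H_mult_B: "H k ** B k = mat 1"
  by (rule pos_def_matrix_inv[OF pos_def_H])

lemma pos_def_B: "pos_def (B k)"
  by (rule pos_def_right_inverse[OF pos_def_H H_mult_B])

lemma det_B_nonzero: "det (B k) \<noteq> 0"
  using H_mult_B[of k] by (metis det_I det_mul mult_zero_right zero_neq_one)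

lemma B_Suc: "B (Suc k) = bfgs_inverse_update (B k) (s k) (y k)"
proof -
  have "B (Suc k) ** H (Suc k) = mat 1"
    using H_mult_B matrix_left_right_inverse1 by blast
  moreover have "H (Suc k) ** bfgs_inverse_update (B k) (s k) (y k) = mat 1"
    unfolding H_Suc by (rule bfgs_update_inverse_update[OF pos_def_H H_mult_B curvature_pos])
  ultimately show ?thesis
    by (metis matrix_mul_assoc matrix_mul_lid matrix_mul_rid)
qed

lemma step_B_step_pos: "0 < s k \<bullet> (B k *v s k)"
proof -
  have "s k \<noteq> 0"
    using curvature_pos[of k] by auto
  then show ?thesis
    using pos_def_B[of k] by (simp add: pos_def_def)
qed

lemma gradient_along_B_step: "\<exists>t. t \<noteq> 0 \<and> g k = - (t *\<^sub>R (B k *v s k))"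
proof -
  obtain t where t: "H k *v g k = - (t *\<^sub>R s k)"
    using search_direction by blast
  have "g k = B k *v (H k *v g k)"
    using matrix_left_right_inverse1[OF H_mult_B] by (simp add: matrix_vector_mul_assoc)
  then have "g k = - (t *\<^sub>R (B k *v s k))"
    by (simp add: t matrix_vector_mult_scaleR flip: scaleR_minus_left)
  moreover from this have "t \<noteq> 0"
    using gradient_nonzero[of k] by auto
  ultimately show ?thesis
    by blast
qed

lemma potential_Suc_le:
  "bfgs_potential (B (Suc k)) \<le> bfgs_potential (B k) - 1 + (y k \<bullet> y k) / (s k \<bullet> y k)
    + ln ((g k \<bullet> s k)\<^sup>2 / ((g k \<bullet> g k) * (s k \<bullet> y k)))"
proof -
  define \<sigma> where "\<sigma> = s k \<bullet> (B k *v s k)"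
  define r where "r = (B k *v s k) \<bullet> (B k *v s k) / \<sigma>"
  define q where "q = (g k \<bullet> s k)\<^sup>2 / (g k \<bullet> g k)"
  have sy: "0 < s k \<bullet> y k"
    by (rule curvature_pos)
  have \<sigma>: "0 < \<sigma>"
    unfolding \<sigma>_def by (rule step_B_step_pos)
  then have Bs: "B k *v s k \<noteq> 0"
    by (auto simp: \<sigma>_def)
  obtain t where "t \<noteq> 0" and g: "g k = - (t *\<^sub>R (B k *v s k))"
    using gradient_along_B_step by blast
  \<comment> \<open>since g = -t B s, the ratio q equals sigma^2 / |B s|^2\<close>
  have rq: "r * q = \<sigma>"
    using \<sigma> Bs \<open>t \<noteq> 0\<close> unfolding r_def q_def g
    by (simp add: \<sigma>_def inner_commute power2_eq_square field_simps)
  have r: "0 < r"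
    using \<sigma> Bs by (simp add: r_def)
  have q: "0 < q"
    using descent[of k] gradient_nonzero[of k] unfolding q_def
    by (intro divide_pos_pos) auto
  have ln_\<sigma>: "ln \<sigma> = ln r + ln q"
    using ln_mult_pos[OF r q] rq by simp
  have "trace (B (Suc k)) = trace (B k) - r + (y k \<bullet> y k) / (s k \<bullet> y k)"
    unfolding B_Suc trace_bfgs_inverse_update r_def \<sigma>_def ..
  moreover have "ln \<bar>det (B (Suc k))\<bar> = ln \<bar>det (B k)\<bar> + ln (s k \<bullet> y k) - ln \<sigma>"
    using det_bfgs_inverse_update[OF pos_def_H H_mult_B sy] det_B_nonzero[of k] sy \<sigma>
    by (simp add: B_Suc \<sigma>_def abs_mult ln_mult ln_div)
  moreover have "ln r \<le> r - 1"
    using r by (rule ln_le_minus_one)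
  moreover have "ln ((g k \<bullet> s k)\<^sup>2 / ((g k \<bullet> g k) * (s k \<bullet> y k))) = ln q - ln (s k \<bullet> y k)"
    using ln_divide_pos[OF q sy] by (simp add: q_def)
  ultimately show ?thesis
    unfolding bfgs_potential_def using ln_\<sigma> by linarith
qed

lemma objective_decreasing: "f (x (Suc k)) \<le> f (x k)"
proof -
  have "0 \<le> \<mu> * - (g k \<bullet> s k)"
    using descent[of k] line_search_params(1) by (simp add: mult_pos_neg less_imp_le)
  then show ?thesis
    using armijo[of k] by simp
qed

lemma descent_tendsto_zero:
  assumes bounded: "\<And>k. m \<le> f (x k)"
  shows "(\<lambda>k. g k \<bullet> s k) \<longlonglongrightarrow> 0"
proof -
  have decrease: "\<mu> * - (g k \<bullet> s k) \<le> f (x k) - f (x (Suc k))" for k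
    using armijo[of k] by simp
  have dec: "decseq (\<lambda>k. f (x k))"
    using objective_decreasing by (rule decseq_SucI)
  have "\<forall>k. m \<le> f (x k)"
    using bounded by blast
  then obtain l where lim: "(\<lambda>k. f (x k)) \<longlonglongrightarrow> l" "\<forall>k. l \<le> f (x k)"
    by (rule decseq_convergent[OF dec])
  have "(\<lambda>k. f (x k) - f (x (Suc k))) \<longlonglongrightarrow> 0"
    using tendsto_diff[OF lim(1) LIMSEQ_Suc[OF lim(1)]] by simp
  then have upper: "(\<lambda>k. (f (x k) - f (x (Suc k))) / \<mu>) \<longlonglongrightarrow> 0"
    by (rule tendsto_divide_zero)
  have "\<forall>\<^sub>F k in sequentially. 0 \<le> - (g k \<bullet> s k)"
    using descent by (simp add: less_imp_le)
  moreover have "\<forall>\<^sub>F k in sequentially. - (g k \<bullet> s k) \<le> (f (x k) - f (x (Suc k))) / \<mu>"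
    using decrease line_search_params(1) by (simp add: pos_le_divide_eq mult.commute)
  ultimately have "(\<lambda>k. - (g k \<bullet> s k)) \<longlonglongrightarrow> 0"
    using upper by (rule real_tendsto_sandwich[OF _ _ tendsto_const])
  then have "(\<lambda>k. - (- (g k \<bullet> s k))) \<longlonglongrightarrow> - 0"
    by (rule tendsto_minus)
  then show ?thesis
    by simp
qed

lemma descent_squared_over_curvature_le: "(g k \<bullet> s k)\<^sup>2 / (s k \<bullet> y k) \<le> - (g k \<bullet> s k) / (1 - \<nu>)"
proof -
  have "(g k \<bullet> s k)\<^sup>2 / (s k \<bullet> y k) \<le> (g k \<bullet> s k)\<^sup>2 / ((1 - \<nu>) * - (g k \<bullet> s k))"
  proof (rule divide_left_mono)
    have "0 < (1 - \<nu>) * - (g k \<bullet> s k)"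
      using descent[of k] line_search_params by (simp add: mult_pos_neg)
    then show "0 < (s k \<bullet> y k) * ((1 - \<nu>) * - (g k \<bullet> s k))"
      by (rule mult_pos_pos[OF curvature_pos])
  qed (use curvature_lower_bound[of k] in simp_all)
  also have "\<dots> = - (g k \<bullet> s k) / (1 - \<nu>)"
    using descent[of k] by (simp add: power2_eq_square)
  finally show ?thesis .
qed

lemma potential_decreases_by_one:
  assumes c: "0 < c" "c \<le> norm (g k)"
    and curvature_ratio: "y k \<bullet> y k \<le> M * (s k \<bullet> y k)"
    and small: "- (g k \<bullet> s k) < (1 - \<nu>) * c\<^sup>2 * exp (- M)"
  shows "bfgs_potential (B (Suc k)) \<le> bfgs_potential (B k) - 1"
proof -
  have sy: "0 < s k \<bullet> y k"
    by (rule curvature_pos)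
  have gg: "c\<^sup>2 \<le> g k \<bullet> g k"
    using c by (simp add: power2_norm_eq_inner[symmetric] power_mono less_imp_le)
  have pos: "0 < (g k \<bullet> s k)\<^sup>2 / ((g k \<bullet> g k) * (s k \<bullet> y k))"
    using descent[of k] gradient_nonzero[of k] sy by (simp add: zero_less_mult_iff)
  have "(g k \<bullet> s k)\<^sup>2 / ((g k \<bullet> g k) * (s k \<bullet> y k))
      = (g k \<bullet> s k)\<^sup>2 / (s k \<bullet> y k) / (g k \<bullet> g k)"
    by simp
  also have "\<dots> \<le> (- (g k \<bullet> s k) / (1 - \<nu>)) / c\<^sup>2"
  proof (rule frac_le)
    show "0 \<le> - (g k \<bullet> s k) / (1 - \<nu>)"
      using descent[of k] line_search_params by (simp add: divide_nonpos_pos)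
  qed (use descent_squared_over_curvature_le[of k] gg c(1) in simp_all)
  also have "\<dots> < exp (- M)"
    using small c(1) line_search_params by (simp add: field_simps)
  finally have "ln ((g k \<bullet> s k)\<^sup>2 / ((g k \<bullet> g k) * (s k \<bullet> y k))) < - M"
    using ln_ge_iff[OF pos, of "- M"] by linarith
  moreover have "(y k \<bullet> y k) / (s k \<bullet> y k) \<le> M"
    using curvature_ratio sy by (simp add: divide_le_eq)
  ultimately show ?thesis
    using potential_Suc_le[of k] by linarith
qed

theorem gradients_not_bounded_away_from_zero:
  assumes bounded: "\<And>k. m \<le> f (x k)"
    and curvature_ratio: "\<And>k. y k \<bullet> y k \<le> M * (s k \<bullet> y k)"
  shows "\<not> (\<exists>c>0. \<forall>k. c \<le> norm (g k))"
proof
  assume "\<exists>c>0. \<forall>k. c \<le> norm (g k)"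
  then obtain c where c: "0 < c" "\<And>k. c \<le> norm (g k)"
    by blast
  have "0 < (1 - \<nu>) * c\<^sup>2 * exp (- M)"
    using c line_search_params by simp
  then have "\<forall>\<^sub>F k in sequentially. - (g k \<bullet> s k) < (1 - \<nu>) * c\<^sup>2 * exp (- M)"
    using order_tendstoD(2)[OF tendsto_minus[OF descent_tendsto_zero[OF bounded]]] by simp
  then have "\<forall>\<^sub>F k in sequentially. bfgs_potential (B (Suc k)) \<le> bfgs_potential (B k) - 1"
    by (rule eventually_mono) (rule potential_decreases_by_one[OF c curvature_ratio])
  moreover have "bdd_below (range (\<lambda>k. bfgs_potential (B k)))"
    by (rule bdd_belowI2) (rule bfgs_potential_lower_bound[OF pos_def_B det_B_nonzero])
  ultimately show False
    using not_bdd_below_if_eventually_decreasing_by_one[of "\<lambda>k. bfgs_potential (B k)"] by simp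
qed

end

lemma bfgs_seq_imp_bfgs_iteration:
  assumes "bfgs_seq f x"
  obtains g \<mu> \<nu> H where "bfgs_iteration f x g \<mu> \<nu> H" and "\<And>k. has_grad f (g k) (x k)"
  using assms unfolding bfgs_seq_def bfgs_iteration_def bfgs_update_def Let_def by blast

lemma has_grad_norm:
  assumes grad: "has_grad (\<lambda>z. norm z) g x" and "g \<noteq> 0"
  shows "x \<noteq> 0" and "g = sgn x"
proof -
  have deriv: "((\<lambda>z. norm z) has_derivative (\<lambda>h. g \<bullet> h)) (at x)"
    using grad by (simp add: has_grad_def)
  show x: "x \<noteq> 0"
  proof
    assume "x = 0"
    then have "(\<lambda>h. g \<bullet> h) = (\<lambda>h. 0)"
      by (intro has_derivative_local_min[OF deriv]) simp
    then show False
      using \<open>g \<noteq> 0\<close> by (metis inner_eq_zero_iff)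
  qed
  have "(\<lambda>h. g \<bullet> h) = (\<lambda>h. h \<bullet> sgn x)"
    using has_derivative_unique[OF deriv has_derivative_norm[OF x]] .
  then have "g \<bullet> (g - sgn x) = (g - sgn x) \<bullet> sgn x"
    by metis
  then have "(g - sgn x) \<bullet> (g - sgn x) = 0"
    by (simp add: inner_diff_left inner_diff_right inner_commute)
  then show "g = sgn x"
    by simp
qed

lemma norm_add_mult_inner_sgn_diff:
  fixes x x' :: "'a::real_inner"
  assumes "x \<noteq> 0" and "x' \<noteq> 0"
  shows "(norm x + norm x') * ((sgn x' - sgn x) \<bullet> (sgn x' - sgn x)) = 2 * ((x' - x) \<bullet> (sgn x' - sgn x))"
proof -
  have n: "0 < norm x" "0 < norm x'"
    using assms by auto
  have "x \<bullet> x = (norm x)\<^sup>2" "x' \<bullet> x' = (norm x')\<^sup>2"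
    by (simp_all add: power2_norm_eq_inner)
  then show ?thesis
    using n by (simp add: sgn_div_norm inner_diff_left inner_diff_right inner_commute
        power2_eq_square field_simps)
qed

lemma inner_sgn_diff_le:
  fixes x x' :: "'a::real_inner"
  assumes "x \<noteq> 0" "x' \<noteq> 0" "0 < L" "L \<le> norm x" "L \<le> norm x'"
  shows "(sgn x' - sgn x) \<bullet> (sgn x' - sgn x) \<le> 1 / L * ((x' - x) \<bullet> (sgn x' - sgn x))"
proof -
  have "2 * L * ((sgn x' - sgn x) \<bullet> (sgn x' - sgn x))
      \<le> (norm x + norm x') * ((sgn x' - sgn x) \<bullet> (sgn x' - sgn x))"
    using assms(4,5) by (intro mult_right_mono) auto
  then show ?thesis
    unfolding norm_add_mult_inner_sgn_diff[OF assms(1,2)] using assms(3) by (simp add: field_simps)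
qed

theorem corollary4p2:
  fixes x :: "nat \<Rightarrow> real^'n"
  assumes "bfgs_seq (\<lambda>z. norm z) x"
  shows "x \<longlonglongrightarrow> 0"
proof -
  obtain g \<mu> \<nu> H where iteration: "bfgs_iteration (\<lambda>z. norm z) x g \<mu> \<nu> H"
    and grad: "\<And>k. has_grad (\<lambda>z. norm z) (g k) (x k)"
    using bfgs_seq_imp_bfgs_iteration[OF assms] by blast
  interpret bfgs_iteration "\<lambda>z. norm z" x g \<mu> \<nu> H
    by (rule iteration)
  have x: "x k \<noteq> 0" and g: "g k = sgn (x k)" for k
    using has_grad_norm[OF grad gradient_nonzero] by auto
  have "decseq (\<lambda>k. norm (x k))"
    using objective_decreasing by (rule decseq_SucI)
  moreover have "\<forall>k. 0 \<le> norm (x k)"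
    by simp
  ultimately obtain L where L: "(\<lambda>k. norm (x k)) \<longlonglongrightarrow> L" "\<forall>k. L \<le> norm (x k)"
    by (rule decseq_convergent)
  have "L = 0"
  proof (rule ccontr)
    have "0 \<le> L"
      using L(1) by (rule tendsto_lowerbound) auto
    moreover assume "L \<noteq> 0"
    ultimately have "0 < L"
      by simp
    have "y k \<bullet> y k \<le> 1 / L * (s k \<bullet> y k)" for k
      unfolding g using x \<open>0 < L\<close> L(2) by (intro inner_sgn_diff_le) auto
    moreover have "\<exists>c>0. \<forall>k. c \<le> norm (g k)"
      using x by (auto simp: g norm_sgn intro!: exI[of _ 1])
    ultimately show False
      using gradients_not_bounded_away_from_zero[of 0 "1 / L"] by simp
  qed
  then show ?thesis
    using L(1) by (simp add: tendsto_norm_zero_iff)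
qed

end
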